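(* Let $G=(V,E)$ be a circular arc graph which is not an interval graph, let $M=(C,\mathcal A)$ be a circular arc model of $G$, let $p$ be a point of $C$, let $A$ be the set of vertices whose arcs contain $p$, and $B=V\setminus A$. Let $G'=(V,E')$ with $E'=E\cup\{\{u',v'\}: u',v'\in B,\ u'\ne v'\}$, and let $\{I_1',\dots,I_b'\}$ be a box representation of $G'$ of dimension $b=\mathrm{box}(G')$. Let $I$ be an interval representation of the subgraph of $G$ induced on $B$, and let $I'$ be the extension of $I$ on $V$. Then $\mathcal B=\{I_1',\dots,I_b',I'\}$ is a box representation of $G$ and $|\mathcal B|\le 2\,\mathrm{box}(G)+1$.
   Context: A circular arc model of $G$ consists of a circle $C$ and arcs of $C$, one per vertex, such that two vertices are adjacent iff their arcs intersect. An interval graph is the intersection graph of a finite family of intervals of the real line; an interval representation assigns to each vertex $u$ an interval $[l_u,r_u]$ (non-degenerate). A box representation of dimension $k$ of $G=(V,E)$ is a family of $k$ interval graphs $I_1,\dots,I_k$ on vertex set $V$ with $E=E(I_1)\cap\cdots\cap E(I_k)$; $\mathrm{box}(G)$ is the minimum such $k$. Extension: if $I$ is an interval representation of an interval graph on vertex set $W\subseteq V$, with $l=\min_{u\in W} l_u$ and $r=\max_{u\in W} r_u$, the extension of $I$ on $V$ is the interval representation on $V$ assigning $[l_u,r_u]$ to each $u\in W$ and $[l,r]$ to each $u\in V\setminus W$ (so every vertex of $V\setminus W$ is adjacent to all other vertices). *)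

theory Defs
  imports Complex_Main
begin

definition all_pairs :: "'a set \<Rightarrow> 'a set set" where
  "all_pairs V = {{u, v} | u v. u \<in> V \<and> v \<in> V \<and> u \<noteq> v}"

definition graph :: "'a set \<Rightarrow> 'a set set \<Rightarrow> bool" where
  "graph V E \<longleftrightarrow> finite V \<and> E \<subseteq> all_pairs V"

definition interval_rep :: "'a set \<Rightarrow> ('a \<Rightarrow> real \<times> real) \<Rightarrow> bool" where
  "interval_rep W f \<longleftrightarrow> (\<forall>u\<in>W. fst (f u) < snd (f u))"

definition interval_edges :: "'a set \<Rightarrow> ('a \<Rightarrow> real \<times> real) \<Rightarrow> 'a set set" where
  "interval_edges W f = {{u, v} | u v. u \<in> W \<and> v \<in> W \<and> u \<noteq> v \<and>
      max (fst (f u)) (fst (f v)) \<le> min (snd (f u)) (snd (f v))}"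

definition is_interval_graph :: "'a set \<Rightarrow> 'a set set \<Rightarrow> bool" where
  "is_interval_graph V E \<longleftrightarrow> (\<exists>f. interval_rep V f \<and> E = interval_edges V f)"

definition box_rep :: "'a set \<Rightarrow> 'a set set \<Rightarrow> nat \<Rightarrow> (nat \<Rightarrow> 'a \<Rightarrow> real \<times> real) \<Rightarrow> bool" where
  "box_rep V E k Is \<longleftrightarrow> (\<forall>i<k. interval_rep V (Is i)) \<and>
      E = {e \<in> all_pairs V. \<forall>i<k. e \<in> interval_edges V (Is i)}"

definition boxicity :: "'a set \<Rightarrow> 'a set set \<Rightarrow> nat" where
  "boxicity V E = (LEAST k. \<exists>Is. box_rep V E k Is)"

definition extension :: "'a set \<Rightarrow> ('a \<Rightarrow> real \<times> real) \<Rightarrow> 'a \<Rightarrow> real \<times> real" where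
  "extension W f u = (if u \<in> W then f u else (Min ((\<lambda>w. fst (f w)) ` W), Max ((\<lambda>w. snd (f w)) ` W)))"

text \<open>Circle C modelled as [0,1) with wrap-around; an arc is given by a start point s \<in> [0,1)
  and a length 0 < len \<le> 1 and consists of the points reached going (counterclockwise)
  from s by at most len (closed arc).\<close>

definition arc_set :: "real \<times> real \<Rightarrow> real set" where
  "arc_set a = {x \<in> {0..<1}. frac (x - fst a) \<le> snd a}"

definition circular_arc_model :: "'a set \<Rightarrow> 'a set set \<Rightarrow> ('a \<Rightarrow> real \<times> real) \<Rightarrow> bool" where
  "circular_arc_model V E arc \<longleftrightarrow>
     (\<forall>u\<in>V. 0 \<le> fst (arc u) \<and> fst (arc u) < 1 \<and> 0 < snd (arc u) \<and> snd (arc u) \<le> 1) \<and>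
     (\<forall>u\<in>V. \<forall>v\<in>V. u \<noteq> v \<longrightarrow> ({u, v} \<in> E \<longleftrightarrow> arc_set (arc u) \<inter> arc_set (arc v) \<noteq> {}))"

end

theory Submission
  imports Defs
begin

text \<open>The arcs of the vertices in \<open>A\<close> all contain \<open>p\<close>, so \<open>A\<close> is a clique; as \<open>G\<close> is not an
  interval graph, \<open>B\<close> is nonempty. In the extension \<open>I'\<close> every vertex outside \<open>B\<close> is universal and
  nothing changes inside \<open>B\<close>, so intersecting \<open>G'\<close> with \<open>I'\<close> removes exactly the edges added
  inside \<open>B\<close>. For the bound, adding a clique on any vertex set at most doubles the boxicity:
  each interval graph of a box representation of \<open>G\<close> is replaced by two, in which the
  intervals of the clique's vertices are stretched to the far left, respectively to the far
  right; two such vertices then meet in both, while all other intersections are unchanged.\<close>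

lemma mem_all_pairs: "{u, v} \<in> all_pairs V \<longleftrightarrow> u \<in> V \<and> v \<in> V \<and> u \<noteq> v"
  unfolding all_pairs_def by (auto simp: doubleton_eq_iff)

lemma all_pairsE:
  assumes "e \<in> all_pairs V"
  obtains u v where "e = {u, v}" "u \<in> V" "v \<in> V" "u \<noteq> v"
  using assms unfolding all_pairs_def by blast

lemma all_pairs_mono: "W \<subseteq> V \<Longrightarrow> all_pairs W \<subseteq> all_pairs V"
  unfolding all_pairs_def by blast

lemma pair_set_eqI:
  assumes "X \<subseteq> all_pairs V" "Y \<subseteq> all_pairs V"
    and "\<And>u v. u \<in> V \<Longrightarrow> v \<in> V \<Longrightarrow> u \<noteq> v \<Longrightarrow> {u, v} \<in> X \<longleftrightarrow> {u, v} \<in> Y"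
  shows "X = Y"
proof (intro equalityI subsetI)
  fix e assume "e \<in> X"
  with assms(1) obtain u v where "e = {u, v}" "u \<in> V" "v \<in> V" "u \<noteq> v" by (blast elim: all_pairsE)
  with assms(3) \<open>e \<in> X\<close> show "e \<in> Y" by blast
next
  fix e assume "e \<in> Y"
  with assms(2) obtain u v where "e = {u, v}" "u \<in> V" "v \<in> V" "u \<noteq> v" by (blast elim: all_pairsE)
  with assms(3) \<open>e \<in> Y\<close> show "e \<in> X" by blast
qed

lemma restrict_eq_Int_all_pairs:
  assumes "E \<subseteq> all_pairs V"
  shows "{e \<in> E. e \<subseteq> B} = E \<inter> all_pairs B"
proof (rule pair_set_eqI[where V = V])
  show "{e \<in> E. e \<subseteq> B} \<subseteq> all_pairs V" "E \<inter> all_pairs B \<subseteq> all_pairs V"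
    using assms by auto
qed (auto simp: mem_all_pairs)

lemma mem_interval_edges:
  "{u, v} \<in> interval_edges W f \<longleftrightarrow> u \<in> W \<and> v \<in> W \<and> u \<noteq> v \<and>
     fst (f u) \<le> snd (f u) \<and> fst (f u) \<le> snd (f v) \<and> fst (f v) \<le> snd (f u) \<and> fst (f v) \<le> snd (f v)"
  unfolding interval_edges_def by (auto simp: doubleton_eq_iff)

lemma interval_edges_subset_all_pairs: "interval_edges W f \<subseteq> all_pairs W"
  unfolding interval_edges_def all_pairs_def by blast

lemma is_interval_graph_complete: "is_interval_graph V (all_pairs V)"
  unfolding is_interval_graph_def
proof (intro exI conjI)
  show "interval_rep V (\<lambda>_. (0, 1))" unfolding interval_rep_def by simp
  show "all_pairs V = interval_edges V (\<lambda>_. (0, 1))"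
    unfolding interval_edges_def all_pairs_def by auto
qed

definition separating_rep :: "'a \<Rightarrow> 'a \<Rightarrow> 'a \<Rightarrow> real \<times> real" where
  "separating_rep a b w = (if w = a then (0, 1) else if w = b then (2, 3) else (0, 3))"

lemma interval_rep_separating_rep: "interval_rep V (separating_rep a b)"
  unfolding interval_rep_def separating_rep_def by simp

lemma interval_edges_separating_rep:
  "a \<noteq> b \<Longrightarrow> interval_edges V (separating_rep a b) = all_pairs V - {{a, b}}"
  by (rule pair_set_eqI[where V = V])
    (auto simp: interval_edges_subset_all_pairs mem_interval_edges mem_all_pairs
      separating_rep_def doubleton_eq_iff)

lemma box_rep_exists:
  assumes "graph V E"
  shows "\<exists>k Is. box_rep V E k Is"
proof -
  have "finite {(a, b). a \<in> V \<and> b \<in> V \<and> a \<noteq> b \<and> {a, b} \<notin> E}"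
    using assms unfolding graph_def by (auto intro: finite_subset[of _ "V \<times> V"])
  then obtain ps where ps: "set ps = {(a, b). a \<in> V \<and> b \<in> V \<and> a \<noteq> b \<and> {a, b} \<notin> E}"
    using finite_list by blast
  define Is where "Is j = separating_rep (fst (ps ! j)) (snd (ps ! j))" for j
  have "interval_edges V (Is j) = all_pairs V - {{fst (ps ! j), snd (ps ! j)}}"
    if "j < length ps" for j
    using nth_mem[OF that] ps unfolding Is_def by (intro interval_edges_separating_rep) auto
  then have "{e \<in> all_pairs V. \<forall>j<length ps. e \<in> interval_edges V (Is j)}
      = {e \<in> all_pairs V. \<forall>x\<in>set ps. e \<noteq> {fst x, snd x}}"
    by (auto simp: all_set_conv_all_nth)
  also have "\<dots> = E"
  proof (rule pair_set_eqI[where V = V])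
    show "E \<subseteq> all_pairs V" using assms unfolding graph_def by blast
    fix u v assume "u \<in> V" "v \<in> V" "u \<noteq> v"
    then show "{u, v} \<in> {e \<in> all_pairs V. \<forall>x\<in>set ps. e \<noteq> {fst x, snd x}} \<longleftrightarrow> {u, v} \<in> E"
      unfolding ps by (auto simp: mem_all_pairs)
  qed blast
  finally have "E = {e \<in> all_pairs V. \<forall>j<length ps. e \<in> interval_edges V (Is j)}" ..
  moreover have "interval_rep V (Is j)" for j
    unfolding Is_def by (rule interval_rep_separating_rep)
  ultimately show ?thesis
    unfolding box_rep_def by blast
qed

lemma boxicity_box_rep: "graph V E \<Longrightarrow> \<exists>Is. box_rep V E (boxicity V E) Is"
  unfolding boxicity_def using box_rep_exists by (rule LeastI_ex) blast

lemma boxicity_le: "box_rep V E k Is \<Longrightarrow> boxicity V E \<le> k"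
  unfolding boxicity_def by (rule Least_le) blast

lemma box_rep_snoc:
  assumes "box_rep V E' k Is" "interval_rep V g" "E = E' \<inter> interval_edges V g"
  shows "box_rep V E (Suc k) (Is(k := g))"
  using assms unfolding box_rep_def by (auto simp: less_Suc_eq)

lemma interval_hull_bounds:
  assumes "finite W" "interval_rep W f" "w \<in> W"
  shows "Min ((\<lambda>w. fst (f w)) ` W) \<le> fst (f w)" "snd (f w) \<le> Max ((\<lambda>w. snd (f w)) ` W)"
    and "Min ((\<lambda>w. fst (f w)) ` W) \<le> snd (f w)" "fst (f w) \<le> Max ((\<lambda>w. snd (f w)) ` W)"
proof -
  have "fst (f w) < snd (f w)" using assms(2,3) unfolding interval_rep_def by blast
  moreover show "Min ((\<lambda>w. fst (f w)) ` W) \<le> fst (f w)" "snd (f w) \<le> Max ((\<lambda>w. snd (f w)) ` W)"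
    using assms(1,3) by auto
  ultimately show "Min ((\<lambda>w. fst (f w)) ` W) \<le> snd (f w)" "fst (f w) \<le> Max ((\<lambda>w. snd (f w)) ` W)"
    by linarith+
qed

lemma interval_hull_nondegenerate:
  assumes "finite W" "W \<noteq> {}" "interval_rep W f"
  shows "Min ((\<lambda>w. fst (f w)) ` W) < Max ((\<lambda>w. snd (f w)) ` W)"
proof -
  obtain w where "w \<in> W" using assms(2) by blast
  with assms interval_hull_bounds[of W f w] show ?thesis
    unfolding interval_rep_def by (meson order.strict_trans1 order.strict_trans2)
qed

context
  fixes W :: "'a set" and f :: "'a \<Rightarrow> real \<times> real"
  assumes finite: "finite W" and nonempty: "W \<noteq> {}" and rep: "interval_rep W f"
begin

lemma interval_rep_extension: "interval_rep V (extension W f)"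
  using rep interval_hull_nondegenerate[OF finite nonempty rep]
  unfolding interval_rep_def extension_def by auto

lemma interval_edges_extension:
  assumes "W \<subseteq> V"
  shows "interval_edges V (extension W f) = interval_edges W f \<union> (all_pairs V - all_pairs W)"
proof (rule pair_set_eqI[where V = V])
  show "interval_edges W f \<union> (all_pairs V - all_pairs W) \<subseteq> all_pairs V"
    using interval_edges_subset_all_pairs all_pairs_mono[OF assms] by blast
  fix u v assume uv: "u \<in> V" "v \<in> V" "u \<noteq> v"
  show "{u, v} \<in> interval_edges V (extension W f) \<longleftrightarrow>
      {u, v} \<in> interval_edges W f \<union> (all_pairs V - all_pairs W)"
    using uv rep interval_hull_bounds[OF finite rep] interval_hull_nondegenerate[OF finite nonempty rep]
    by (auto simp: mem_interval_edges mem_all_pairs extension_def interval_rep_def)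
qed (rule interval_edges_subset_all_pairs)

end

lemma box_rep_extension:
  assumes "box_rep V (E \<union> all_pairs B) k Is"
    and "E \<subseteq> all_pairs V" "B \<subseteq> V" "finite B" "B \<noteq> {}"
    and "interval_rep B f" "interval_edges B f = {e \<in> E. e \<subseteq> B}"
  shows "box_rep V E (Suc k) (Is(k := extension B f))"
proof (rule box_rep_snoc[OF assms(1) interval_rep_extension])
  have "interval_edges V (extension B f) = (E \<inter> all_pairs B) \<union> (all_pairs V - all_pairs B)"
    using interval_edges_extension assms restrict_eq_Int_all_pairs by metis
  then show "E = (E \<union> all_pairs B) \<inter> interval_edges V (extension B f)"
    using assms(2) by blast
qed (use assms in auto)

definition stretch_left :: "'a set \<Rightarrow> 'a set \<Rightarrow> ('a \<Rightarrow> real \<times> real) \<Rightarrow> 'a \<Rightarrow> real \<times> real" where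
  "stretch_left V B g w = (if w \<in> B then (Min ((\<lambda>x. fst (g x)) ` V), snd (g w)) else g w)"

definition stretch_right :: "'a set \<Rightarrow> 'a set \<Rightarrow> ('a \<Rightarrow> real \<times> real) \<Rightarrow> 'a \<Rightarrow> real \<times> real" where
  "stretch_right V B g w = (if w \<in> B then (fst (g w), Max ((\<lambda>x. snd (g x)) ` V)) else g w)"

context
  fixes V B :: "'a set" and g :: "'a \<Rightarrow> real \<times> real"
  assumes finite: "finite V" and rep: "interval_rep V g" and subset: "B \<subseteq> V"
begin

lemma interval_rep_stretch: "interval_rep V (stretch_left V B g)" "interval_rep V (stretch_right V B g)"
  using rep interval_hull_bounds[OF finite rep] subset
  unfolding interval_rep_def stretch_left_def stretch_right_def by fastforce+

lemma interval_edges_stretch: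
  "interval_edges V (stretch_left V B g) \<inter> interval_edges V (stretch_right V B g)
     = interval_edges V g \<union> all_pairs B"
proof (rule pair_set_eqI[where V = V])
  show "interval_edges V g \<union> all_pairs B \<subseteq> all_pairs V"
    using interval_edges_subset_all_pairs all_pairs_mono[OF subset] by blast
  fix u v assume uv: "u \<in> V" "v \<in> V" "u \<noteq> v"
  have lt: "fst (g u) < snd (g u)" "fst (g v) < snd (g v)"
    using rep uv unfolding interval_rep_def by auto
  show "{u, v} \<in> interval_edges V (stretch_left V B g) \<inter> interval_edges V (stretch_right V B g)
      \<longleftrightarrow> {u, v} \<in> interval_edges V g \<union> all_pairs B"
    using uv lt interval_hull_bounds[OF finite rep uv(1)] interval_hull_bounds[OF finite rep uv(2)]
    by (auto simp: mem_interval_edges mem_all_pairs stretch_left_def stretch_right_def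
        split: if_splits)
qed (use interval_edges_subset_all_pairs in blast)

end

lemma all_less_double: "(\<forall>j<2 * (k::nat). P j) \<longleftrightarrow> (\<forall>i<k. P (2 * i) \<and> P (2 * i + 1))"
proof (intro iffI allI impI)
  fix j assume "\<forall>i<k. P (2 * i) \<and> P (2 * i + 1)" "j < 2 * k"
  moreover have "j = 2 * (j div 2) \<or> j = 2 * (j div 2) + 1" by presburger
  ultimately show "P j" by (metis less_mult_imp_div_less mult.commute)
qed auto

lemma box_rep_add_clique:
  assumes "finite V" "box_rep V E k Is" "B \<subseteq> V"
  shows "box_rep V (E \<union> all_pairs B) (2 * k) (\<lambda>j. (if even j then stretch_left else stretch_right)
    V B (Is (j div 2)))" (is "box_rep V _ _ ?Js")
proof -
  have rep: "interval_rep V (Is i)" if "i < k" for i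
    using assms(2) that unfolding box_rep_def by blast
  have Js: "(\<forall>j<2 * k. e \<in> interval_edges V (?Js j)) \<longleftrightarrow>
      (\<forall>i<k. e \<in> interval_edges V (stretch_left V B (Is i)) \<inter> interval_edges V (stretch_right V B (Is i)))"
    for e
    unfolding all_less_double by simp
  have "E \<union> all_pairs B = {e \<in> all_pairs V. \<forall>i<k. e \<in> interval_edges V (Is i) \<union> all_pairs B}"
    using assms(2) all_pairs_mono[OF assms(3)] unfolding box_rep_def by auto
  also have "\<dots> = {e \<in> all_pairs V. \<forall>j<2 * k. e \<in> interval_edges V (?Js j)}"
    unfolding Js using interval_edges_stretch[OF assms(1) rep assms(3)] by auto
  finally show ?thesis
    unfolding box_rep_def using interval_rep_stretch[OF assms(1) rep assms(3)] by auto
qed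

lemma circular_arc_model_clique_at_point:
  assumes "circular_arc_model V E arc"
  shows "all_pairs {v \<in> V. p \<in> arc_set (arc v)} \<subseteq> E"
  using assms unfolding circular_arc_model_def by (auto elim!: all_pairsE)

theorem lemma7:
  fixes V :: "'a set" and E :: "'a set set" and arc :: "'a \<Rightarrow> real \<times> real" and p :: real
    and Is :: "nat \<Rightarrow> 'a \<Rightarrow> real \<times> real" and f :: "'a \<Rightarrow> real \<times> real"
  assumes "graph V E"
    and "\<not> is_interval_graph V E"
    and "circular_arc_model V E arc"
    and "p \<in> {0..<1}"
    and "A = {v \<in> V. p \<in> arc_set (arc v)}"
    and "B = V - A"
    and "E' = E \<union> {{u', v'} | u' v'. u' \<in> B \<and> v' \<in> B \<and> u' \<noteq> v'}"
    and "b = boxicity V E'"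
    and "box_rep V E' b Is"
    and "interval_rep B f"
    and "interval_edges B f = {e \<in> E. e \<subseteq> B}"
  shows "box_rep V E (b + 1) (Is(b := extension B f)) \<and> b + 1 \<le> 2 * boxicity V E + 1"
proof
  have fin: "finite V" and E: "E \<subseteq> all_pairs V" using assms(1) unfolding graph_def by auto
  have E': "E' = E \<union> all_pairs B" using assms(7) unfolding all_pairs_def .
  have A_clique: "all_pairs A \<subseteq> E"
    using circular_arc_model_clique_at_point[OF assms(3)] assms(5) by simp
  have "B \<noteq> {}"
  proof
    assume "B = {}"
    then have "A = V" using assms(5,6) by blast
    with E A_clique have "E = all_pairs V" by (metis subset_antisym)
    with assms(2) is_interval_graph_complete show False by metis
  qed
  then show "box_rep V E (b + 1) (Is(b := extension B f))"
    using box_rep_extension[of V E B b Is f] assms(6,9-11) E E' fin by auto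
  obtain J where "box_rep V E (boxicity V E) J" using boxicity_box_rep[OF assms(1)] ..
  from box_rep_add_clique[OF fin this, of B] show "b + 1 \<le> 2 * boxicity V E + 1"
    using boxicity_le assms(6,8) E' by fastforce
qed

end
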